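(* Let $M\ge 1$ be an integer and let $\tau>0$, $P_0>0$, $\bar{P}>0$, $R_0>0$. Let $|h_0|^2,|h_1|^2,\dots,|h_M|^2$ be independent random variables, each exponentially distributed with mean $1$, and let $|h_{(1)}|^2\le\cdots\le|h_{(M)}|^2$ denote the order statistics of $|h_1|^2,\dots,|h_M|^2$. Let $N$ be the (random) number of indices $m\in\{1,\dots,M\}$ with $|h_m|^2<\tau$ (so the admitted users have gains $|h_{(1)}|^2,\dots,|h_{(N)}|^2$). Define the outage probability $$\mathbb{P}_0^{\mathrm{I,OL}}=\mathbb{P}\left(\log_2\left(1+\frac{|h_0|^2P_0}{\sum_{j=1}^{N}|h_{(j)}|^2\bar{P}+1}\right)<R_0\right),$$ where the empty sum (case $N=0$) equals $0$. Then, with $\epsilon_0=2^{R_0}-1$, \begin{align*} \mathbb{P}_0^{\mathrm{I,OL}} =& \sum_{n=1}^{M}\frac{M!}{n!(M-n)!}e^{-(M-n)\tau}\left(1-e^{-\tau}\right)^n \sum_{p=0}^{n} \frac{\binom{n}{p}(-1)^pe^{-p\tau}}{(1-e^{-\tau})^n}\left( \sum_{l=0}^{n-1} \frac{\epsilon_0P_0^{-1}\bar{P}\,e^{-\epsilon_0P_0^{-1}(1+\bar{P}p\tau)}}{(1+\epsilon_0P_0^{-1}\bar{P})^{l+1}} + e^{-\epsilon_0P_0^{-1}}-e^{-\epsilon_0P_0^{-1}(1+\bar{P}p\tau)}\right)\\ &+\left(1-e^{-\epsilon_0P_0^{-1}}\right). \end{align*}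
   Context: Uplink semi-grant-free NOMA model: a grant-based user $\mathrm{U}_0$ with channel $h_0$ and transmit SNR $P_0$, and $M$ grant-free users with channels $h_m$ and common transmit SNR $\bar{P}$; all channels are i.i.d. Rayleigh fading, so the channel gains $|h_m|^2$ are i.i.d. exponential with mean 1, and noise power is normalized to 1. In the "Type I open-loop" protocol the base station broadcasts a threshold $\tau$ and exactly the grant-free users whose channel gain is below $\tau$ transmit; the base station decodes $\mathrm{U}_0$'s signal first in successive interference cancellation, treating all admitted grant-free users' signals as interference, and $\mathrm{U}_0$ is in outage if its achievable rate is below its target rate $R_0$. *)

theory Defs
  imports "HOL-Probability.Probability"
begin

definition order_stat :: "real list \<Rightarrow> nat \<Rightarrow> real" where
  "order_stat xs j = sort xs ! (j - 1)"

definition admitted_count :: "nat \<Rightarrow> real \<Rightarrow> (nat \<Rightarrow> real) \<Rightarrow> nat" where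
  "admitted_count M \<tau> g = card {m \<in> {1..M}. g m < \<tau>}"

definition admitted_gain_sum :: "nat \<Rightarrow> real \<Rightarrow> (nat \<Rightarrow> real) \<Rightarrow> real" where
  "admitted_gain_sum M \<tau> g =
     (\<Sum>j = 1..admitted_count M \<tau> g. order_stat (map g [1..<M+1]) j)"

end

(* Since the admitted users are exactly those with gain below tau, the sum of the N smallest gains
   is the sum of the gains below tau, i.e. D = sum_m g(|h_m|^2) with g x = x for 0 <= x < tau and
   g x = 0 otherwise; no order statistics are needed.  U_0 is in outage iff |h_0|^2 < a (1 + Pb D) with
   a = eps_0 / P0, and as |h_0|^2 ~ Exp(1) is independent of D, the outage probability is
   1 - e^-a E[e^-(a Pb D)].  The summands of D are i.i.d., so this expectation is the M-th power
   of E[e^-(c g(X))] = e^-tau + (1 - e^-(1+c) tau) / (1 + c), c = a Pb.  The paper's double sum is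
   this closed form expanded twice by the binomial theorem and once by a finite geometric sum. *)

theory Submission
  imports Defs
begin

(* The guard 0 <= x only matters on a null set, as the gains are a.s. positive; it keeps
   exp (- c * admitted_gain tau x) bounded by 1 for c >= 0. *)
definition admitted_gain :: "real \<Rightarrow> real \<Rightarrow> real" where
  "admitted_gain \<tau> x = (if 0 \<le> x \<and> x < \<tau> then x else 0)"

lemma admitted_gain_nonneg: "0 \<le> admitted_gain \<tau> x"
  by (simp add: admitted_gain_def)

lemma borel_measurable_admitted_gain [measurable]: "admitted_gain \<tau> \<in> borel_measurable borel"
  unfolding admitted_gain_def by measurable

lemma take_length_filter_less_sorted:
  fixes ys :: "'a::linorder list"
  assumes "sorted ys"
  shows "take (length (filter (\<lambda>x. x < t) ys)) ys = filter (\<lambda>x. x < t) ys"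
  using assms
proof (induction ys)
  case (Cons y ys)
  show ?case
  proof (cases "y < t")
    case False
    with Cons.prems have "filter (\<lambda>x. x < t) ys = []" by (auto simp: filter_empty_conv)
    with False show ?thesis by simp
  qed (use Cons in simp)
qed simp

lemma admitted_gain_sum_eq_sum_below:
  "admitted_gain_sum M \<tau> g = (\<Sum>m = 1..M. if g m < \<tau> then g m else 0)"
proof -
  define xs where "xs = map g [1..<M+1]"
  define N where "N = admitted_count M \<tau> g"
  have "N = length (filter (\<lambda>m. g m < \<tau>) [1..<M+1])"
    unfolding N_def admitted_count_def
    by (subst distinct_card[symmetric]) (auto intro: arg_cong[where f=card])
  then have N: "N = length (filter (\<lambda>x. x < \<tau>) (sort xs))"
    by (simp add: xs_def filter_map comp_def filter_sort)
  have "admitted_gain_sum M \<tau> g = (\<Sum>j<N. sort xs ! j)"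
    unfolding admitted_gain_sum_def order_stat_def N_def[symmetric] xs_def[symmetric]
    by (rule sum.reindex_bij_witness[of _ Suc "\<lambda>j. j - 1"]) auto
  also have "\<dots> = sum_list (take N (sort xs))"
    using length_filter_le[of "\<lambda>x. x < \<tau>" "sort xs"] unfolding N[symmetric]
    by (simp add: sum_list_sum_nth atLeast0LessThan min_absorb1)
  also have "\<dots> = sum_list (filter (\<lambda>x. x < \<tau>) xs)"
    unfolding N take_length_filter_less_sorted[OF sorted_sort]
    by (metis mset_filter mset_sort sum_mset_sum_list)
  also have "\<dots> = (\<Sum>m = 1..M. if g m < \<tau> then g m else 0)"
    by (simp add: xs_def filter_map comp_def sum_list_distinct_conv_sum_set
        atLeastLessThanSuc_atLeastAtMost del: upt_Suc) (simp flip: sum.inter_filter)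
  finally show ?thesis .
qed

lemma admitted_gain_sum_eq_sum_admitted_gain:
  assumes "\<And>m. m \<in> {1..M} \<Longrightarrow> 0 \<le> g m"
  shows "admitted_gain_sum M \<tau> g = (\<Sum>m = 1..M. admitted_gain \<tau> (g m))"
  unfolding admitted_gain_sum_eq_sum_below using assms by (intro sum.cong) (auto simp: admitted_gain_def)

lemma log_rate_less_iff:
  fixes x I P0 R0 :: real
  assumes "0 < x" and "0 \<le> I" and "0 < P0"
  shows "log 2 (1 + x * P0 / (I + 1)) < R0 \<longleftrightarrow> x < (2 powr R0 - 1) / P0 * (1 + I)"
proof -
  have "0 < 1 + x * P0 / (I + 1)" using assms by (simp add: add_pos_nonneg)
  then have "log 2 (1 + x * P0 / (I + 1)) < R0 \<longleftrightarrow> x * P0 / (I + 1) < 2 powr R0 - 1"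
    by (subst log_less_iff) auto
  also have "\<dots> \<longleftrightarrow> x < (2 powr R0 - 1) / P0 * (1 + I)"
    using assms by (simp add: pos_divide_less_eq pos_less_divide_eq field_simps)
  finally show ?thesis .
qed

lemma outage_condition_iff:
  assumes "\<forall>m\<in>{0..M}. 0 < g m" and "0 < P0" and "0 \<le> Pb"
  shows "log 2 (1 + g 0 * P0 / (admitted_gain_sum M \<tau> g * Pb + 1)) < R0
     \<longleftrightarrow> g 0 < (2 powr R0 - 1) / P0 * (1 + Pb * (\<Sum>m = 1..M. admitted_gain \<tau> (g m)))"
proof -
  have "admitted_gain_sum M \<tau> g = (\<Sum>m = 1..M. admitted_gain \<tau> (g m))"
    using assms(1) by (intro admitted_gain_sum_eq_sum_admitted_gain) (auto intro: less_imp_le)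
  moreover have "0 \<le> (\<Sum>m = 1..M. admitted_gain \<tau> (g m)) * Pb"
    using assms(3) by (simp add: sum_nonneg admitted_gain_nonneg)
  ultimately show ?thesis
    using assms by (simp add: log_rate_less_iff mult.commute[of Pb])
qed

lemma sum_binomial_from_1:
  fixes u x :: "'a::comm_ring_1"
  shows "(\<Sum>n = 1..M. of_nat (M choose n) * u ^ (M - n) * x ^ n) = (u + x) ^ M - u ^ M"
proof -
  have "(u + x) ^ M = (\<Sum>n\<in>insert 0 {1..M}. of_nat (M choose n) * u ^ (M - n) * x ^ n)"
    unfolding binomial_ring[of x u M, unfolded add.commute[of x]]
    by (intro sum.cong) (auto simp: mult_ac)
  then show ?thesis by simp
qed

lemma sum_alternating_binomial:
  fixes x :: "'a::comm_ring_1"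
  shows "(\<Sum>p = 0..n. of_nat (n choose p) * (-1) ^ p * x ^ p) = (1 - x) ^ n"
  using binomial_ring[of "- x" 1 n]
  by (simp add: atLeast0AtMost power_minus' mult.assoc)

lemma geometric_sum_inverse_powers:
  fixes c :: real
  assumes "c > 0"
  shows "c * (\<Sum>l<n. 1 / (1 + c) ^ (l + 1)) = 1 - 1 / (1 + c) ^ n"
proof -
  define r where "r = 1 / (1 + c)"
  have "r \<noteq> 1" "c * r = 1 - r" using assms by (auto simp: r_def field_simps)
  then have "c * (\<Sum>l<n. r * r ^ l) = 1 - r ^ n"
    by (simp add: sum_distrib_left[symmetric] sum_gp_strict mult.assoc[symmetric])
  then show ?thesis by (simp add: r_def power_one_over)
qed

lemma sum_geometric_weights:
  fixes c E :: real
  assumes "c > 0" and "n \<ge> 1"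
  shows "(\<Sum>l = 0..n - 1. c * E / (1 + c) ^ (l + 1)) = E * (1 - 1 / (1 + c) ^ n)"
proof -
  have "{0..n - 1} = {..<n}" using assms(2) by auto
  then have "(\<Sum>l = 0..n - 1. c * E / (1 + c) ^ (l + 1)) = E * (c * (\<Sum>l<n. 1 / (1 + c) ^ (l + 1)))"
    by (simp add: sum_distrib_left mult_ac)
  then show ?thesis by (simp only: geometric_sum_inverse_powers[OF assms(1)])
qed

lemma outage_sum_closed_form:
  fixes a b \<tau> :: real
  assumes "a > 0" and "b > 0" and "\<tau> > 0"
  shows "(\<Sum>n = 1..M. fact M / (fact n * fact (M - n)) * exp (- real (M - n) * \<tau>) * (1 - exp (- \<tau>)) ^ n
            * (\<Sum>p = 0..n. real (n choose p) * (-1) ^ p * exp (- real p * \<tau>) / (1 - exp (- \<tau>)) ^ n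
                * ((\<Sum>l = 0..n - 1. a * b * exp (- a * (1 + b * real p * \<tau>)) / (1 + a * b) ^ (l + 1))
                   + exp (- a) - exp (- a * (1 + b * real p * \<tau>)))))
         + (1 - exp (- a))
       = 1 - exp (- a) * (exp (- \<tau>) + (1 - exp (- (1 + a * b) * \<tau>)) / (1 + a * b)) ^ M"
    (is "?S + _ = _")
proof -
  define c where "c = a * b"
  define u where "u = exp (- \<tau>)"
  define w where "w = exp (- c * \<tau>)"
  define q where "q = (1 - u * w) / (1 + c)"
  have c: "c > 0" using assms by (simp add: c_def)
  have v: "1 - u \<noteq> 0" using assms(3) by (simp add: u_def)
  have exp_u: "exp (- real p * \<tau>) = u ^ p" for p :: nat
    by (simp add: u_def flip: exp_of_nat_mult)
  have exp_w: "exp (- a * (1 + b * real p * \<tau>)) = exp (- a) * w ^ p" for p :: nat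
    by (simp add: w_def c_def algebra_simps flip: exp_add exp_of_nat_mult)
  have bracket: "(\<Sum>l = 0..n - 1. a * b * exp (- a * (1 + b * real p * \<tau>)) / (1 + a * b) ^ (l + 1))
                 + exp (- a) - exp (- a * (1 + b * real p * \<tau>))
               = exp (- a) * (1 - w ^ p / (1 + c) ^ n)" if "n \<ge> 1" for n p
    unfolding c_def[symmetric] sum_geometric_weights[OF c that] exp_w by (simp add: algebra_simps)
  have inner: "(\<Sum>p = 0..n. real (n choose p) * (-1) ^ p * exp (- real p * \<tau>) / (1 - exp (- \<tau>)) ^ n
                * ((\<Sum>l = 0..n - 1. a * b * exp (- a * (1 + b * real p * \<tau>)) / (1 + a * b) ^ (l + 1))
                   + exp (- a) - exp (- a * (1 + b * real p * \<tau>))))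
             = exp (- a) * ((1 - u) ^ n - q ^ n) / (1 - u) ^ n" if "n \<ge> 1" for n
  proof -
    have "(\<Sum>p = 0..n. real (n choose p) * (-1) ^ p * exp (- real p * \<tau>) / (1 - exp (- \<tau>)) ^ n
                * ((\<Sum>l = 0..n - 1. a * b * exp (- a * (1 + b * real p * \<tau>)) / (1 + a * b) ^ (l + 1))
                   + exp (- a) - exp (- a * (1 + b * real p * \<tau>))))
        = (\<Sum>p = 0..n. exp (- a) / (1 - u) ^ n * (real (n choose p) * (-1) ^ p * u ^ p
            - real (n choose p) * (-1) ^ p * (u * w) ^ p / (1 + c) ^ n))"
      unfolding bracket[OF that] exp_u u_def[symmetric]
      using v c by (intro sum.cong) (simp_all add: power_mult_distrib field_simps)
    also have "\<dots> = exp (- a) / (1 - u) ^ n * ((\<Sum>p = 0..n. real (n choose p) * (-1) ^ p * u ^ p)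
            - (\<Sum>p = 0..n. real (n choose p) * (-1) ^ p * (u * w) ^ p) / (1 + c) ^ n)"
      by (simp only: sum_subtractf sum_distrib_left[symmetric] sum_divide_distrib[symmetric])
    finally show ?thesis
      by (simp add: sum_alternating_binomial q_def power_divide)
  qed
  have outer: "fact M / (fact n * fact (M - n)) * exp (- real (M - n) * \<tau>) * (1 - exp (- \<tau>)) ^ n
            * (\<Sum>p = 0..n. real (n choose p) * (-1) ^ p * exp (- real p * \<tau>) / (1 - exp (- \<tau>)) ^ n
                * ((\<Sum>l = 0..n - 1. a * b * exp (- a * (1 + b * real p * \<tau>)) / (1 + a * b) ^ (l + 1))
                   + exp (- a) - exp (- a * (1 + b * real p * \<tau>))))
      = exp (- a) * (real (M choose n) * u ^ (M - n) * (1 - u) ^ n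
                     - real (M choose n) * u ^ (M - n) * q ^ n)"
    if "n \<in> {1..M}" for n
  proof -
    have n: "1 \<le> n" "n \<le> M" using that by auto
    show ?thesis
      unfolding inner[OF n(1)] unfolding exp_u u_def[symmetric]
      using n v by (simp add: binomial_fact field_simps)
  qed
  have "?S
      = exp (- a) * ((\<Sum>n = 1..M. real (M choose n) * u ^ (M - n) * (1 - u) ^ n)
            - (\<Sum>n = 1..M. real (M choose n) * u ^ (M - n) * q ^ n))"
    by (simp only: outer sum_subtractf sum_distrib_left[symmetric] cong: sum.cong)
  also have "\<dots> = exp (- a) * (1 - (u + q) ^ M)"
    by (simp only: sum_binomial_from_1) simp
  also have "u + q = exp (- \<tau>) + (1 - exp (- (1 + a * b) * \<tau>)) / (1 + a * b)"
    by (simp add: q_def u_def w_def c_def algebra_simps flip: exp_add)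
  finally show ?thesis by (simp add: algebra_simps)
qed

context prob_space
begin

lemma AE_distributed_lborel_neq:
  assumes "distributed M lborel X f"
  shows "AE \<omega> in M. X \<omega> \<noteq> t"
  using AE_lborel_singleton[of t] by (subst distributed_AE2[OF assms]) (auto elim: AE_mp)

lemma AE_exponential_distributed_pos:
  assumes "distributed M lborel X (exponential_density l)"
  shows "AE \<omega> in M. 0 < X \<omega>"
proof -
  have "AE x in lborel. 0 < ennreal (exponential_density l x) \<longrightarrow> 0 < x"
    using AE_lborel_singleton[of 0] by eventually_elim (auto simp: exponential_density_def)
  then show ?thesis by (subst distributed_AE2[OF assms]) auto
qed

lemma prob_outage_eq_prob_less:
  assumes "\<And>m. m \<in> {0..K} \<Longrightarrow> distributed M lborel (h m) (exponential_density 1)"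
    and "0 < P0" and "0 \<le> Pb"
  shows "prob {\<omega> \<in> space M. log 2 (1 + h 0 \<omega> * P0 / (admitted_gain_sum K \<tau> (\<lambda>m. h m \<omega>) * Pb + 1)) < R0}
       = prob {\<omega> \<in> space M.
           h 0 \<omega> < (2 powr R0 - 1) / P0 * (1 + Pb * (\<Sum>m = 1..K. admitted_gain \<tau> (h m \<omega>)))}"
    (is "prob ?A = prob ?B")
proof (rule measure_eq_AE)
  have "AE \<omega> in M. \<forall>m\<in>{0..K}. 0 < h m \<omega>"
    using assms(1) by (intro AE_finite_allI AE_exponential_distributed_pos) auto
  then show "AE \<omega> in M. \<omega> \<in> ?A \<longleftrightarrow> \<omega> \<in> ?B"
    by eventually_elim (simp add: outage_condition_iff[of K "\<lambda>m. h m _"] assms(2,3))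
  have [measurable]: "h m \<in> borel_measurable M" if "m \<in> {0..K}" for m
    using distributed_measurable[OF assms(1)[OF that]] by simp
  then show "?A \<in> events" "?B \<in> events"
    unfolding admitted_gain_sum_eq_sum_below by measurable
qed

lemma exponential_distributed_less:
  assumes D: "distributed M lborel X (exponential_density l)" and "0 \<le> t" and "0 < l"
  shows "prob {\<omega> \<in> space M. X \<omega> < t} = 1 - exp (- t * l)"
proof -
  have [measurable]: "X \<in> borel_measurable M" using distributed_measurable[OF D] by simp
  have "prob {\<omega> \<in> space M. X \<omega> < t} = prob {\<omega> \<in> space M. X \<omega> \<le> t}"
    using AE_distributed_lborel_neq[OF D, of t] by (intro measure_eq_AE) auto
  then show ?thesis using exponential_distributedD_le[OF D assms(2,3)] by simp
qed

lemma emeasure_less_indep_var: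
  fixes X T :: "'a \<Rightarrow> real"
  assumes [measurable]: "X \<in> borel_measurable M" "T \<in> borel_measurable M"
    and indep: "indep_var borel X borel T"
  shows "emeasure M {\<omega> \<in> space M. X \<omega> < T \<omega>}
       = (\<integral>\<^sup>+\<omega>. emeasure M {\<omega>' \<in> space M. X \<omega>' < T \<omega>} \<partial>M)"
proof -
  let ?X = "distr M borel X" and ?T = "distr M borel T"
  interpret X: prob_space ?X by (rule prob_space_distr) simp
  interpret T: prob_space ?T by (rule prob_space_distr) simp
  interpret pair_sigma_finite ?X ?T ..
  define A :: "(real \<times> real) set" where "A = {p. fst p < snd p}"
  have "open A" unfolding A_def by (intro open_Collect_less continuous_intros)
  then have [measurable]: "A \<in> sets (borel \<Otimes>\<^sub>M borel)" unfolding borel_prod by (rule borel_open)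
  have "{\<omega> \<in> space M. X \<omega> < T \<omega>} = (\<lambda>\<omega>. (X \<omega>, T \<omega>)) -` A \<inter> space M"
    by (auto simp: A_def)
  then have "emeasure M {\<omega> \<in> space M. X \<omega> < T \<omega>}
      = emeasure (distr M (borel \<Otimes>\<^sub>M borel) (\<lambda>\<omega>. (X \<omega>, T \<omega>))) A"
    by (simp add: emeasure_distr)
  also have "\<dots> = emeasure (?X \<Otimes>\<^sub>M ?T) A"
    using indep by (simp add: indep_var_distribution_eq)
  also have "\<dots> = (\<integral>\<^sup>+t. emeasure ?X ((\<lambda>x. (x, t)) -` A) \<partial>?T)"
    by (rule emeasure_pair_measure_alt2) (simp add: sets_pair_measure_cong[OF sets_distr sets_distr])
  also have "\<dots> = (\<integral>\<^sup>+\<omega>. emeasure M {\<omega>' \<in> space M. X \<omega>' < T \<omega>} \<partial>M)"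
    by (subst nn_integral_distr)
      (auto simp: emeasure_distr A_def intro!: nn_integral_cong arg_cong[where f="emeasure M"])
  finally show ?thesis .
qed

lemma prob_exponential_less_indep_var:
  fixes X T :: "'a \<Rightarrow> real"
  assumes D: "distributed M lborel X (exponential_density 1)"
    and T [measurable]: "T \<in> borel_measurable M" and T_nonneg: "\<And>\<omega>. \<omega> \<in> space M \<Longrightarrow> 0 \<le> T \<omega>"
    and indep: "indep_var borel X borel T"
  shows "prob {\<omega> \<in> space M. X \<omega> < T \<omega>} = expectation (\<lambda>\<omega>. 1 - exp (- T \<omega>))"
proof -
  have X [measurable]: "X \<in> borel_measurable M" using distributed_measurable[OF D] by simp
  have "emeasure M {\<omega> \<in> space M. X \<omega> < T \<omega>} = (\<integral>\<^sup>+\<omega>. ennreal (1 - exp (- T \<omega>)) \<partial>M)"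
    unfolding emeasure_less_indep_var[OF X T indep]
    by (intro nn_integral_cong)
      (simp add: emeasure_eq_measure exponential_distributed_less[OF D] T_nonneg)
  also have "\<dots> = ennreal (expectation (\<lambda>\<omega>. 1 - exp (- T \<omega>)))"
    using T_nonneg by (intro nn_integral_eq_integral integrable_const_bound[where B=1] AE_I2) auto
  finally show ?thesis
    using T_nonneg by (simp add: emeasure_eq_measure integral_nonneg)
qed

lemma exponential_expectation_indicator_exp:
  assumes D: "distributed M lborel X (exponential_density 1)" and "0 \<le> s" and "0 \<le> k"
  shows "expectation (\<lambda>\<omega>. indicator {0..<s} (X \<omega>) * exp (- k * X \<omega>))
       = (1 - exp (- (1 + k) * s)) / (1 + k)"
proof -
  have "expectation (\<lambda>\<omega>. indicator {0..<s} (X \<omega>) * exp (- k * X \<omega>))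
      = (\<integral>x. exponential_density 1 x * (indicator {0..<s} x * exp (- k * x)) \<partial>lborel)"
    by (rule distributed_integral[OF D, symmetric]) (auto simp: exponential_density_nonneg)
  also have "\<dots> = (\<integral>x. exp (- (1 + k) * x) * indicator {0..s} x \<partial>lborel)"
    using AE_lborel_singleton[of s]
    by (intro integral_cong_AE) (auto elim!: AE_mp simp: exponential_density_def indicator_def
        algebra_simps simp flip: exp_add)
  also have "\<dots> = - exp (- (1 + k) * s) / (1 + k) - - exp (- (1 + k) * 0) / (1 + k)"
    using assms(2,3)
    by (intro integral_FTC_Icc_real)
      (auto intro!: derivative_eq_intros simp: field_simps add_nonneg_eq_0_iff)
  finally show ?thesis by (simp add: diff_divide_distrib)
qed

lemma exponential_laplace_admitted_gain:
  assumes D: "distributed M lborel X (exponential_density 1)" and "0 \<le> \<tau>" and "0 \<le> c"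
  shows "expectation (\<lambda>\<omega>. exp (- c * admitted_gain \<tau> (X \<omega>)))
       = exp (- \<tau>) + (1 - exp (- (1 + c) * \<tau>)) / (1 + c)"
proof -
  have [measurable]: "X \<in> borel_measurable M" using distributed_measurable[OF D] by simp
  have int: "integrable M (\<lambda>\<omega>. indicator {0..<\<tau>} (X \<omega>) * exp (- k * X \<omega>))" if "0 \<le> k" for k :: real
    using that by (intro integrable_const_bound[where B=1] AE_I2) (auto simp: indicator_def)
  \<comment> \<open>Writing 1 as exp (- 0 * x) lets both parts be evaluated by the previous lemma.\<close>
  have "exp (- c * admitted_gain \<tau> x)
      = indicator {0..<\<tau>} x * exp (- c * x) + (1 - indicator {0..<\<tau>} x * exp (- 0 * x))" for x
    by (simp add: admitted_gain_def indicator_def)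
  then have "expectation (\<lambda>\<omega>. exp (- c * admitted_gain \<tau> (X \<omega>)))
      = expectation (\<lambda>\<omega>. indicator {0..<\<tau>} (X \<omega>) * exp (- c * X \<omega>))
        + (1 - expectation (\<lambda>\<omega>. indicator {0..<\<tau>} (X \<omega>) * exp (- 0 * X \<omega>)))"
    using int[OF \<open>0 \<le> c\<close>] int[of 0] by (simp add: prob_space del: mult_zero_left minus_zero)
  also have "\<dots> = (1 - exp (- (1 + c) * \<tau>)) / (1 + c) + (1 - (1 - exp (- (1 + 0) * \<tau>)) / (1 + 0))"
    using assms(2,3) by (simp only: exponential_expectation_indicator_exp[OF D] order.refl)
  finally show ?thesis by simp
qed

lemma exponential_laplace_sum_admitted_gain:
  assumes indep: "indep_vars (\<lambda>_. borel) X J" and "finite J"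
    and D: "\<And>j. j \<in> J \<Longrightarrow> distributed M lborel (X j) (exponential_density 1)"
    and "0 \<le> \<tau>" and "0 \<le> c"
  shows "expectation (\<lambda>\<omega>. exp (- c * (\<Sum>j\<in>J. admitted_gain \<tau> (X j \<omega>))))
       = (exp (- \<tau>) + (1 - exp (- (1 + c) * \<tau>)) / (1 + c)) ^ card J"
proof -
  have "expectation (\<lambda>\<omega>. exp (- c * (\<Sum>j\<in>J. admitted_gain \<tau> (X j \<omega>))))
      = expectation (\<lambda>\<omega>. \<Prod>j\<in>J. exp (- c * admitted_gain \<tau> (X j \<omega>)))"
    using \<open>finite J\<close> by (simp add: sum_distrib_left exp_sum flip: sum_negf)
  also have "\<dots> = (\<Prod>j\<in>J. expectation (\<lambda>\<omega>. exp (- c * admitted_gain \<tau> (X j \<omega>))))"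
  proof (rule indep_vars_lebesgue_integral[OF \<open>finite J\<close>])
    show "indep_vars (\<lambda>_. borel) (\<lambda>j \<omega>. exp (- c * admitted_gain \<tau> (X j \<omega>))) J"
      by (rule indep_vars_compose2[OF indep]) measurable
    show "integrable M (\<lambda>\<omega>. exp (- c * admitted_gain \<tau> (X j \<omega>)))" if "j \<in> J" for j
      using D[OF that, THEN distributed_measurable] \<open>0 \<le> c\<close>
      by (intro integrable_const_bound[where B=1] AE_I2) (auto simp: admitted_gain_nonneg)
  qed
  also have "\<dots> = (\<Prod>j\<in>J. exp (- \<tau>) + (1 - exp (- (1 + c) * \<tau>)) / (1 + c))"
    using assms by (intro prod.cong refl exponential_laplace_admitted_gain[OF D])
  finally show ?thesis by simp
qed

lemma indep_var_sum_components:
  fixes X :: "'i \<Rightarrow> 'a \<Rightarrow> real"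
  assumes "finite I" and "i \<notin> I" and indep: "indep_vars (\<lambda>_. borel) X (insert i I)"
    and [measurable]: "f \<in> borel_measurable borel"
  shows "indep_var borel (X i) borel (\<lambda>\<omega>. \<Sum>j\<in>I. f (X j \<omega>))"
proof -
  have "indep_vars (\<lambda>_. borel) (\<lambda>j \<omega>. (if j = i then id else f) (X j \<omega>)) (insert i I)"
    by (rule indep_vars_compose2[OF indep]) auto
  moreover have "(\<lambda>\<omega>. \<Sum>j\<in>I. (if j = i then id else f) (X j \<omega>)) = (\<lambda>\<omega>. \<Sum>j\<in>I. f (X j \<omega>))"
    using \<open>i \<notin> I\<close> by (intro ext sum.cong) auto
  ultimately show ?thesis
    using indep_vars_sum[OF assms(1,2)] by fastforce
qed

lemma prob_exponential_less_affine_indep_var: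
  fixes X D :: "'a \<Rightarrow> real"
  assumes X_exp: "distributed M lborel X (exponential_density 1)"
    and [measurable]: "D \<in> borel_measurable M" and D_nonneg: "\<And>\<omega>. \<omega> \<in> space M \<Longrightarrow> 0 \<le> D \<omega>"
    and indep: "indep_var borel X borel D" and "0 \<le> a" and "0 \<le> b"
  shows "prob {\<omega> \<in> space M. X \<omega> < a * (1 + b * D \<omega>)}
       = 1 - exp (- a) * expectation (\<lambda>\<omega>. exp (- (a * b) * D \<omega>))"
proof -
  have "indep_var borel (id \<circ> X) borel ((\<lambda>d. a * (1 + b * d)) \<circ> D)"
    by (rule indep_var_compose[OF indep]) auto
  then have "prob {\<omega> \<in> space M. X \<omega> < a * (1 + b * D \<omega>)}
      = expectation (\<lambda>\<omega>. 1 - exp (- (a * (1 + b * D \<omega>))))"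
    using assms by (intro prob_exponential_less_indep_var[OF X_exp]) (auto simp: comp_def)
  also have "\<dots> = expectation (\<lambda>\<omega>. 1 - exp (- a) * exp (- (a * b) * D \<omega>))"
    by (simp add: algebra_simps flip: exp_add)
  also have "\<dots> = 1 - exp (- a) * expectation (\<lambda>\<omega>. exp (- (a * b) * D \<omega>))"
  proof -
    have "integrable M (\<lambda>\<omega>. exp (- (a * b) * D \<omega>))"
      using assms by (intro integrable_const_bound[where B=1] AE_I2) auto
    then show ?thesis by (simp add: prob_space)
  qed
  finally show ?thesis .
qed

end

theorem theorem1:
  fixes \<Omega> :: "'a measure" and h :: "nat \<Rightarrow> 'a \<Rightarrow> real"
    and M :: nat and \<tau> P0 Pb R0 :: real
  assumes "prob_space \<Omega>"
    and "M \<ge> 1" and "\<tau> > 0" and "P0 > 0" and "Pb > 0" and "R0 > 0"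
    and "prob_space.indep_vars \<Omega> (\<lambda>_. borel) h {0..M}"
    and "\<And>m. m \<in> {0..M} \<Longrightarrow> distributed \<Omega> lborel (h m) (exponential_density 1)"
  shows "measure \<Omega> {\<omega> \<in> space \<Omega>.
            log 2 (1 + h 0 \<omega> * P0 / (admitted_gain_sum M \<tau> (\<lambda>m. h m \<omega>) * Pb + 1)) < R0}
       = (let \<epsilon>\<^sub>0 = 2 powr R0 - 1 in
          (\<Sum>n = 1..M. fact M / (fact n * fact (M - n)) * exp (- (real (M - n)) * \<tau>)
              * (1 - exp (- \<tau>)) ^ n
              * (\<Sum>p = 0..n. real (n choose p) * (-1) ^ p * exp (- real p * \<tau>) / (1 - exp (- \<tau>)) ^ n
                  * ((\<Sum>l = 0..n - 1. \<epsilon>\<^sub>0 / P0 * Pb * exp (- \<epsilon>\<^sub>0 / P0 * (1 + Pb * real p * \<tau>))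
                                       / (1 + \<epsilon>\<^sub>0 / P0 * Pb) ^ (l + 1))
                     + exp (- \<epsilon>\<^sub>0 / P0) - exp (- \<epsilon>\<^sub>0 / P0 * (1 + Pb * real p * \<tau>)))))
          + (1 - exp (- \<epsilon>\<^sub>0 / P0)))" (is "_ = ?rhs")
proof -
  interpret prob_space \<Omega> by fact
  define a where "a = (2 powr R0 - 1) / P0"
  define D where "D \<omega> = (\<Sum>m = 1..M. admitted_gain \<tau> (h m \<omega>))" for \<omega>
  have a: "0 < a" using assms(4,6) by (simp add: a_def)
  have D: "D \<in> borel_measurable \<Omega>"
    unfolding D_def using distributed_measurable[OF assms(8)]
    by (intro borel_measurable_sum measurable_compose[OF _ borel_measurable_admitted_gain]) auto
  have "measure \<Omega> {\<omega> \<in> space \<Omega>.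
               log 2 (1 + h 0 \<omega> * P0 / (admitted_gain_sum M \<tau> (\<lambda>m. h m \<omega>) * Pb + 1)) < R0}
      = prob {\<omega> \<in> space \<Omega>. h 0 \<omega> < a * (1 + Pb * D \<omega>)}"
    unfolding a_def D_def using assms(4,5,8) by (intro prob_outage_eq_prob_less) auto
  also have "\<dots> = 1 - exp (- a) * expectation (\<lambda>\<omega>. exp (- (a * Pb) * D \<omega>))"
  proof (rule prob_exponential_less_affine_indep_var)
    show "indep_var borel (h 0) borel D"
      unfolding D_def using assms(7)
      by (intro indep_var_sum_components) (simp_all add: atLeastAtMost_insertL)
    show "0 \<le> D \<omega>" for \<omega>
      unfolding D_def by (simp add: sum_nonneg admitted_gain_nonneg)
  qed (use assms a D in auto)
  also have "\<dots> = 1 - exp (- a) * (exp (- \<tau>) + (1 - exp (- (1 + a * Pb) * \<tau>)) / (1 + a * Pb)) ^ M"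
    unfolding D_def using assms a
    by (subst exponential_laplace_sum_admitted_gain[OF indep_vars_subset[OF assms(7)]]) auto
  also have "\<dots> = ?rhs"
    using outage_sum_closed_form[OF a assms(5,3), of M] by (simp add: a_def Let_def)
  finally show ?thesis .
qed

end
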